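(* Let $G=(\mathscr{V},\mathscr{E},m,\theta)$ be a bi-partite weighted graph and $V:\mathscr{V}\to[0,\infty)$. The following are equivalent: (i) $\langle f,(d_G(Q)-V(Q))f\rangle\le\langle f,\Delta_{\mathscr{E},\theta}f\rangle$ for all $f\in\mathcal{C}_c(\mathscr{V})$; (ii) $\langle f,\Delta_{\mathscr{E},\theta}f\rangle\le\langle f,(d_G(Q)+V(Q))f\rangle$ for all $f\in\mathcal{C}_c(\mathscr{V})$; (iii) $|\langle f,\mathcal{A}_{\mathscr{E},\theta}f\rangle|\le\langle f,V(Q)f\rangle$ for all $f\in\mathcal{C}_c(\mathscr{V})$, where $(\mathcal{A}_{\mathscr{E},\theta}f)(x):=m^{-2}(x)\sum_{y\in\mathscr{V}}\mathscr{E}(x,y)e^{i\theta(x,y)}f(y)$ is the magnetic adjacency matrix.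
   Context: A weighted graph $G=(\mathscr{V},\mathscr{E},m,\theta)$: $\mathscr{V}$ countable, $\mathscr{E}:\mathscr{V}\times\mathscr{V}\to[0,\infty)$ symmetric, $m:\mathscr{V}\to(0,\infty)$, $\theta:\mathscr{V}\times\mathscr{V}\to[-\pi,\pi]$ antisymmetric; $x\sim y$ iff $\mathscr{E}(x,y)\neq0$; assumed locally finite, connected, without loops. Bi-partite: $\mathscr{V}$ can be partitioned into two subsets such that no two vertices in the same subset are neighbors. In $\ell^2(\mathscr{V},m^2)$ (inner product $\sum_x m^2(x)\overline{f(x)}g(x)$), $\Delta_{\mathscr{E},\theta}$ acts on finitely supported $f$ by $(\Delta_{\mathscr{E},\theta}f)(x)=m^{-2}(x)\sum_y\mathscr{E}(x,y)(f(x)-e^{i\theta(x,y)}f(y))$; $d_G(x)=m^{-2}(x)\sum_y\mathscr{E}(x,y)$; $W(Q)$ is multiplication by $W$; $\mathcal{C}_c(\mathscr{V})$ = finitely supported functions. *)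

theory Defs
  imports "HOL-Analysis.Analysis"
begin

definition nbrs :: "('v \<Rightarrow> 'v \<Rightarrow> real) \<Rightarrow> 'v \<Rightarrow> 'v set" where
  "nbrs E x = {y. E x y \<noteq> 0}"

definition weighted_graph ::
  "('v::countable \<Rightarrow> 'v \<Rightarrow> real) \<Rightarrow> ('v \<Rightarrow> real) \<Rightarrow> ('v \<Rightarrow> 'v \<Rightarrow> real) \<Rightarrow> bool" where
  "weighted_graph E m \<theta> \<longleftrightarrow>
     (\<forall>x y. E x y \<ge> 0 \<and> E x y = E y x) \<and>
     (\<forall>x. m x > 0) \<and>
     (\<forall>x y. \<theta> x y = - \<theta> y x \<and> - pi \<le> \<theta> x y \<and> \<theta> x y \<le> pi) \<and>
     (\<forall>x. finite (nbrs E x)) \<and>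
     (\<forall>x y. (\<lambda>a b. E a b \<noteq> 0)\<^sup>*\<^sup>* x y) \<and>
     (\<forall>x. E x x = 0)"

definition bipartite :: "('v \<Rightarrow> 'v \<Rightarrow> real) \<Rightarrow> bool" where
  "bipartite E \<longleftrightarrow> (\<exists>A. \<forall>x y. E x y \<noteq> 0 \<longrightarrow> (x \<in> A \<longleftrightarrow> y \<notin> A))"

definition finsupp :: "('v \<Rightarrow> complex) \<Rightarrow> bool" where
  "finsupp f \<longleftrightarrow> finite {x. f x \<noteq> 0}"

definition ip :: "('v \<Rightarrow> real) \<Rightarrow> ('v \<Rightarrow> complex) \<Rightarrow> ('v \<Rightarrow> complex) \<Rightarrow> complex" where
  "ip m f g = (\<Sum>x\<in>{x. f x \<noteq> 0}. complex_of_real ((m x)\<^sup>2) * cnj (f x) * g x)"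

definition mag_laplacian ::
  "('v \<Rightarrow> 'v \<Rightarrow> real) \<Rightarrow> ('v \<Rightarrow> real) \<Rightarrow> ('v \<Rightarrow> 'v \<Rightarrow> real) \<Rightarrow> ('v \<Rightarrow> complex) \<Rightarrow> 'v \<Rightarrow> complex" where
  "mag_laplacian E m \<theta> f x =
     complex_of_real (1 / (m x)\<^sup>2) *
       (\<Sum>y\<in>nbrs E x. complex_of_real (E x y) * (f x - cis (\<theta> x y) * f y))"

definition mag_adjacency ::
  "('v \<Rightarrow> 'v \<Rightarrow> real) \<Rightarrow> ('v \<Rightarrow> real) \<Rightarrow> ('v \<Rightarrow> 'v \<Rightarrow> real) \<Rightarrow> ('v \<Rightarrow> complex) \<Rightarrow> 'v \<Rightarrow> complex" where
  "mag_adjacency E m \<theta> f x =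
     complex_of_real (1 / (m x)\<^sup>2) *
       (\<Sum>y\<in>nbrs E x. complex_of_real (E x y) * cis (\<theta> x y) * f y)"

definition degree :: "('v \<Rightarrow> 'v \<Rightarrow> real) \<Rightarrow> ('v \<Rightarrow> real) \<Rightarrow> 'v \<Rightarrow> real" where
  "degree E m x = (1 / (m x)\<^sup>2) * (\<Sum>y\<in>nbrs E x. E x y)"

definition mult_op :: "('v \<Rightarrow> real) \<Rightarrow> ('v \<Rightarrow> complex) \<Rightarrow> 'v \<Rightarrow> complex" where
  "mult_op W f x = complex_of_real (W x) * f x"

end

theory Submission
  imports Defs
begin

text \<open>On finitely supported \<open>f\<close> the Laplacian form splits as
  \<open>\<langle>f, \<Delta> f\<rangle> = \<langle>f, d_G f\<rangle> - \<langle>f, \<A> f\<rangle>\<close>, and \<open>\<langle>f, \<A> f\<rangle>\<close> is real because \<open>\<A>\<close> is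
  symmetric. So (i) says \<open>\<langle>f, \<A> f\<rangle> \<le> \<langle>f, V f\<rangle>\<close>, (ii) says \<open>-\<langle>f, \<A> f\<rangle> \<le> \<langle>f, V f\<rangle>\<close>
  and (iii) is their conjunction. On a bipartite graph with parts \<open>A\<close> and its
  complement, flipping the sign of \<open>f\<close> on \<open>A\<close> negates \<open>\<langle>f, \<A> f\<rangle>\<close>, since every
  edge joins the two parts, while it leaves \<open>\<langle>f, V f\<rangle>\<close> and the support unchanged.
  Hence (i) and (ii) are equivalent, and both are equivalent to (iii).\<close>

lemma weighted_graph_sym: "weighted_graph E m \<theta> \<Longrightarrow> E x y = E y x"
  unfolding weighted_graph_def by fast

lemma weighted_graph_antisym: "weighted_graph E m \<theta> \<Longrightarrow> \<theta> x y = - \<theta> y x"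
  unfolding weighted_graph_def by fast

lemma weighted_graph_weight_nonzero: "weighted_graph E m \<theta> \<Longrightarrow> m x \<noteq> 0"
  unfolding weighted_graph_def by (metis less_irrefl)

lemma weighted_graph_finite_nbrs: "weighted_graph E m \<theta> \<Longrightarrow> finite (nbrs E x)"
  unfolding weighted_graph_def by fast

lemma ip_diff_right: "ip m f (\<lambda>x. g x - h x) = ip m f g - ip m f h"
  unfolding ip_def by (simp add: algebra_simps sum_subtractf)

lemma ip_add_right: "ip m f (\<lambda>x. g x + h x) = ip m f g + ip m f h"
  unfolding ip_def by (simp add: algebra_simps sum.distrib)

lemma ip_mult_op_diff:
  "ip m f (mult_op (\<lambda>x. a x - b x) f) = ip m f (mult_op a f) - ip m f (mult_op b f)"
  unfolding mult_op_def by (simp add: algebra_simps flip: ip_diff_right)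

lemma ip_mult_op_add:
  "ip m f (mult_op (\<lambda>x. a x + b x) f) = ip m f (mult_op a f) + ip m f (mult_op b f)"
  unfolding mult_op_def by (simp add: algebra_simps flip: ip_add_right)

lemma mag_laplacian_eq_degree_minus_adjacency:
  "mag_laplacian E m \<theta> f x = mult_op (degree E m) f x - mag_adjacency E m \<theta> f x"
proof -
  have "(\<Sum>y\<in>nbrs E x. complex_of_real (E x y) * (f x - cis (\<theta> x y) * f y))
     = complex_of_real (\<Sum>y\<in>nbrs E x. E x y) * f x
       - (\<Sum>y\<in>nbrs E x. complex_of_real (E x y) * cis (\<theta> x y) * f y)"
    by (simp add: right_diff_distrib sum_subtractf sum_distrib_right mult.assoc)
  then show ?thesis
    unfolding mag_laplacian_def mult_op_def degree_def mag_adjacency_def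
    by (simp add: right_diff_distrib mult.assoc)
qed

lemma ip_mag_laplacian:
  "ip m f (mag_laplacian E m \<theta> f) = ip m f (mult_op (degree E m) f) - ip m f (mag_adjacency E m \<theta> f)"
  unfolding ip_diff_right[symmetric]
  by (rule arg_cong[where f = "ip m f"]) (simp add: fun_eq_iff mag_laplacian_eq_degree_minus_adjacency)

definition adjacency_form :: "('v \<Rightarrow> 'v \<Rightarrow> real) \<Rightarrow> ('v \<Rightarrow> 'v \<Rightarrow> real) \<Rightarrow> ('v \<Rightarrow> complex) \<Rightarrow> complex" where
  "adjacency_form E \<theta> f = (\<Sum>x\<in>{x. f x \<noteq> 0}. \<Sum>y\<in>{x. f x \<noteq> 0}.
      complex_of_real (E x y) * cis (\<theta> x y) * cnj (f x) * f y)"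

lemma ip_mag_adjacency_eq_adjacency_form:
  assumes fin: "\<And>x. finite (nbrs E x)" and m_nonzero: "\<And>x. m x \<noteq> 0" and "finsupp f"
  shows "ip m f (mag_adjacency E m \<theta> f) = adjacency_form E \<theta> f"
proof -
  let ?S = "{x. f x \<noteq> 0}"
  let ?t = "\<lambda>x y. complex_of_real (E x y) * cis (\<theta> x y) * cnj (f x) * f y"
  have "finite ?S" using \<open>finsupp f\<close> unfolding finsupp_def .
  have nbrs_to_supp: "(\<Sum>y\<in>nbrs E x. ?t x y) = (\<Sum>y\<in>?S. ?t x y)" for x
  proof -
    have "(\<Sum>y\<in>nbrs E x. ?t x y) = (\<Sum>y\<in>nbrs E x \<inter> ?S. ?t x y)"
      by (rule sum.mono_neutral_right) (use fin in auto)
    also have "\<dots> = (\<Sum>y\<in>?S. ?t x y)"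
      by (rule sum.mono_neutral_left) (use \<open>finite ?S\<close> in \<open>auto simp: nbrs_def\<close>)
    finally show ?thesis .
  qed
  have "ip m f (mag_adjacency E m \<theta> f) = (\<Sum>x\<in>?S. \<Sum>y\<in>nbrs E x. ?t x y)"
    unfolding ip_def mag_adjacency_def
  proof (rule sum.cong[OF refl])
    fix x
    have "complex_of_real ((m x)\<^sup>2) * complex_of_real (1 / (m x)\<^sup>2) = 1"
      using m_nonzero[of x] by (simp flip: of_real_mult)
    then show "complex_of_real ((m x)\<^sup>2) * cnj (f x) *
        (complex_of_real (1 / (m x)\<^sup>2) * (\<Sum>y\<in>nbrs E x. complex_of_real (E x y) * cis (\<theta> x y) * f y))
       = (\<Sum>y\<in>nbrs E x. ?t x y)"
      using m_nonzero[of x] by (simp add: sum_distrib_left algebra_simps)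
  qed
  also have "\<dots> = adjacency_form E \<theta> f"
    unfolding adjacency_form_def using nbrs_to_supp by simp
  finally show ?thesis .
qed

lemma adjacency_form_real:
  assumes sym: "\<And>x y. E x y = E y x" and anti: "\<And>x y. \<theta> x y = - \<theta> y x"
  shows "adjacency_form E \<theta> f = complex_of_real (Re (adjacency_form E \<theta> f))"
proof -
  let ?S = "{x. f x \<noteq> 0}"
  have cnj_cis: "cnj (cis (\<theta> x y)) = cis (\<theta> y x)" for x y
    using anti[of y x] by (simp add: cis_cnj)
  have "cnj (adjacency_form E \<theta> f) = (\<Sum>x\<in>?S. \<Sum>y\<in>?S.
      complex_of_real (E y x) * cis (\<theta> y x) * cnj (f y) * f x)"
    unfolding adjacency_form_def cnj_sum
    by (intro sum.cong refl) (simp add: cnj_cis sym)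
  also have "\<dots> = adjacency_form E \<theta> f"
    unfolding adjacency_form_def by (rule sum.swap)
  finally show ?thesis
    by (simp add: complex_eq_iff)
qed

lemma ip_mag_adjacency_real:
  assumes "weighted_graph E m \<theta>" and "finsupp f"
  shows "ip m f (mag_adjacency E m \<theta> f) = complex_of_real (Re (adjacency_form E \<theta> f))"
proof -
  have "ip m f (mag_adjacency E m \<theta> f) = adjacency_form E \<theta> f"
    using assms by (intro ip_mag_adjacency_eq_adjacency_form weighted_graph_finite_nbrs
        weighted_graph_weight_nonzero)
  also have "\<dots> = complex_of_real (Re (adjacency_form E \<theta> f))"
    using assms(1) by (intro adjacency_form_real weighted_graph_sym weighted_graph_antisym)
  finally show ?thesis .
qed

definition sign_flip :: "'v set \<Rightarrow> ('v \<Rightarrow> complex) \<Rightarrow> 'v \<Rightarrow> complex" where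
  "sign_flip A f x = (if x \<in> A then - f x else f x)"

lemma sign_flip_support: "{x. sign_flip A f x \<noteq> 0} = {x. f x \<noteq> 0}"
  by (auto simp: sign_flip_def)

lemma finsupp_sign_flip: "finsupp (sign_flip A f) = finsupp f"
  unfolding finsupp_def sign_flip_support ..

lemma ip_mult_op_sign_flip:
  "ip m (sign_flip A f) (mult_op V (sign_flip A f)) = ip m f (mult_op V f)"
  unfolding ip_def sign_flip_support mult_op_def
  by (intro sum.cong refl) (auto simp: sign_flip_def)

lemma adjacency_form_sign_flip:
  assumes "\<And>x y. E x y \<noteq> 0 \<Longrightarrow> x \<in> A \<longleftrightarrow> y \<notin> A"
  shows "adjacency_form E \<theta> (sign_flip A f) = - adjacency_form E \<theta> f"
  unfolding adjacency_form_def sign_flip_support sum_negf[symmetric]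
  by (intro sum.cong refl) (use assms in \<open>fastforce simp: sign_flip_def\<close>)

lemma bound_iff_neg_bound_if_odd:
  assumes "\<And>f. P (s f) = P f" and "\<And>f. a (s f) = - a f" and "\<And>f. v (s f) = v f"
  shows "(\<forall>f. P f \<longrightarrow> a f \<le> (v f :: 'b::ordered_ab_group_add))
    \<longleftrightarrow> (\<forall>f. P f \<longrightarrow> - a f \<le> v f)"
  by (metis assms minus_minus)

theorem proposition3p1:
  fixes E :: "'v::countable \<Rightarrow> 'v \<Rightarrow> real" and m :: "'v \<Rightarrow> real"
    and \<theta> :: "'v \<Rightarrow> 'v \<Rightarrow> real" and V :: "'v \<Rightarrow> real"
  assumes "weighted_graph E m \<theta>" and "bipartite E" and "\<forall>x. V x \<ge> 0"
  shows "((\<forall>f. finsupp f \<longrightarrow>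
            Re (ip m f (mult_op (\<lambda>x. degree E m x - V x) f)) \<le> Re (ip m f (mag_laplacian E m \<theta> f)))
        \<longleftrightarrow> (\<forall>f. finsupp f \<longrightarrow>
            Re (ip m f (mag_laplacian E m \<theta> f)) \<le> Re (ip m f (mult_op (\<lambda>x. degree E m x + V x) f))))
       \<and> ((\<forall>f. finsupp f \<longrightarrow>
            Re (ip m f (mag_laplacian E m \<theta> f)) \<le> Re (ip m f (mult_op (\<lambda>x. degree E m x + V x) f)))
        \<longleftrightarrow> (\<forall>f. finsupp f \<longrightarrow>
            cmod (ip m f (mag_adjacency E m \<theta> f)) \<le> Re (ip m f (mult_op V f))))"
proof -
  obtain A where parts: "\<And>x y. E x y \<noteq> 0 \<Longrightarrow> x \<in> A \<longleftrightarrow> y \<notin> A"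
    using assms(2) unfolding bipartite_def by blast
  define a where "a f = Re (adjacency_form E \<theta> f)" for f
  define v where "v f = Re (ip m f (mult_op V f))" for f
  have adjacency: "ip m f (mag_adjacency E m \<theta> f) = complex_of_real (a f)" if "finsupp f" for f
    unfolding a_def using ip_mag_adjacency_real[OF assms(1) that] .
  have "(\<forall>f. finsupp f \<longrightarrow> a f \<le> v f) \<longleftrightarrow> (\<forall>f. finsupp f \<longrightarrow> - a f \<le> v f)"
    by (rule bound_iff_neg_bound_if_odd[where s = "sign_flip A"])
      (simp_all add: finsupp_sign_flip a_def v_def ip_mult_op_sign_flip adjacency_form_sign_flip[OF parts])
  then show ?thesis
    by (simp add: ip_mag_laplacian ip_mult_op_diff ip_mult_op_add adjacency v_def[symmetric] abs_le_iff
        cong: imp_cong) blast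
qed

end
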